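(* Let $K\ge2$ and let $\mathbf u^*=\{u_i^*\}_{i=1}^K\subset\mathbb R^d$ satisfy $\|u_i^*-u_j^*\|_2\ge100\sqrt{d\log K}$ for all $i\ne j$. If $\mathbf u=\{u_i\}_{i=1}^K\subset\mathbb R^d$ satisfies $d_{\mathrm{TV}}(p_{\mathbf u}(x),p_{\mathbf u^*}(x))\le\frac1{4K}$, then there is a permutation $\pi$ of $[K]$ with $\|u_i^*-u_{\pi(i)}\|_2\le16\sqrt{d\log K}$ for every $i\in[K]$.
   Context: $p_{\mathbf u}(x)=\frac1K\sum_{i=1}^KN(u_i,I_d)$ denotes the equal-weight Gaussian mixture density with centers $\mathbf u$; $d_{\mathrm{TV}}(P,Q)=\frac12\int|p-q|$. *)

theory Defs
  imports "HOL-Analysis.Analysis"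
begin

definition gauss_density :: "real^'n \<Rightarrow> real^'n \<Rightarrow> real" where
  "gauss_density c x = (2 * pi) powr (- real CARD('n) / 2) * exp (- (norm (x - c))\<^sup>2 / 2)"

definition mixture_density :: "nat \<Rightarrow> (nat \<Rightarrow> real^'n) \<Rightarrow> real^'n \<Rightarrow> real" where
  "mixture_density K u x = (1 / real K) * (\<Sum>i<K. gauss_density (u i) x)"

definition tv_dist :: "('a::euclidean_space \<Rightarrow> real) \<Rightarrow> ('a \<Rightarrow> real) \<Rightarrow> real" where
  "tv_dist p q = (1 / 2) * (\<integral>x. \<bar>p x - q x\<bar> \<partial>lborel)"

end

theory Submission
  imports Defs "HOL-Probability.Distributions"
begin

text \<open>
  A standard Gaussian has exponential moment \<open>E exp(\<parallel>X - c\<parallel>\<^sup>2/4) = 2\<^bsup>d/2\<^esup>\<close>, so by Markov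
  it puts mass at most \<open>\<tau> = exp(-R\<^sup>2/4) 2\<^bsup>d/2\<^esup>\<close> outside the ball of radius \<open>R\<close> around its
  centre. Take \<open>R = 8 \<surd>(d log K)\<close>, so that \<open>\<tau>(K + 1) < 1/2\<close>. If no \<open>u\<^sub>j\<close> lay within \<open>2R\<close>
  of \<open>u\<^sub>i\<^sup>*\<close>, the ball \<open>B(u\<^sub>i\<^sup>*, R)\<close> would carry mass at least \<open>(1 - \<tau>)/K\<close> under \<open>p\<^sub>u\<^sub>*\<close> but
  at most \<open>\<tau>\<close> under \<open>p\<^sub>u\<close>, forcing \<open>d\<^sub>T\<^sub>V > 1/(4K)\<close>. So every \<open>u\<^sub>i\<^sup>*\<close> has some \<open>u\<^sub>j\<close> within
  \<open>16 \<surd>(d log K)\<close>, and since the \<open>u\<^sub>i\<^sup>*\<close> are more than twice that far apart, the choice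
  \<open>i \<mapsto> j\<close> is injective, hence a permutation.
\<close>

lemma integrable_indicator_mult:
  fixes f :: "'a \<Rightarrow> real"
  shows "A \<in> sets M \<Longrightarrow> integrable M f \<Longrightarrow> integrable M (\<lambda>x. indicator A x * f x)"
  using integrable_mult_indicator[of A M f] by simp

lemma card_Basis_vec: "card (Basis :: (real^'n) set) = CARD('n)"
  using DIM_cart[where 'a=real and 'b='n] by simp

lemma norm_power2_eq_sum_Basis: "(norm (x::'a::euclidean_space))\<^sup>2 = (\<Sum>b\<in>Basis. (x \<bullet> b)\<^sup>2)"
proof -
  have "(norm x)\<^sup>2 = x \<bullet> x" by (simp add: power2_norm_eq_inner)
  also have "\<dots> = (\<Sum>b\<in>Basis. (x \<bullet> b) * (x \<bullet> b))" by (rule euclidean_inner)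
  finally show ?thesis by (simp add: power2_eq_square)
qed

lemma gauss_density_eq_prod_normal_density:
  "gauss_density c (x::real^'n) = (\<Prod>b\<in>Basis. normal_density (c \<bullet> b) 1 (x \<bullet> b))"
proof -
  have "(\<Prod>b\<in>(Basis::(real^'n) set). normal_density (c \<bullet> b) 1 (x \<bullet> b))
     = (\<Prod>b\<in>(Basis::(real^'n) set). (1 / sqrt (2*pi)) * exp (- ((x - c) \<bullet> b)\<^sup>2 / 2))"
    by (rule prod.cong) (auto simp: normal_density_def inner_diff_left power2_commute)
  also have "\<dots> = (1 / sqrt (2*pi)) ^ CARD('n) * exp (\<Sum>b\<in>(Basis::(real^'n) set). - ((x - c) \<bullet> b)\<^sup>2 / 2)"
    by (simp only: prod.distrib prod_constant card_Basis_vec exp_sum finite_Basis)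
  also have "(\<Sum>b\<in>(Basis::(real^'n) set). - ((x - c) \<bullet> b)\<^sup>2 / 2) = - (norm (x-c))\<^sup>2 / 2"
    by (simp add: norm_power2_eq_sum_Basis sum_negf sum_divide_distrib)
  also have "(1 / sqrt (2*pi)) ^ CARD('n) = (2*pi) powr (- real CARD('n) / 2)"
  proof -
    have "1 / sqrt (2*pi) = (2*pi) powr (-1/2)"
      by (simp add: powr_minus_divide powr_half_sqrt)
    hence "(1 / sqrt (2*pi)) ^ CARD('n) = ((2*pi) powr (-1/2)) powr real CARD('n)"
      by (simp add: powr_realpow)
    also have "\<dots> = (2*pi) powr (- real CARD('n) / 2)" by (simp add: powr_powr)
    finally show ?thesis .
  qed
  finally show ?thesis by (simp add: gauss_density_def)
qed

lemma exp_quarter_times_normal_density: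
  "exp ((y - m)\<^sup>2 / 4) * normal_density m 1 y = sqrt 2 * normal_density m (sqrt 2) y"
proof -
  have e: "exp ((y - m)\<^sup>2 / 4) * exp (- (y - m)\<^sup>2 / 2) = exp (- (y - m)\<^sup>2 / 4)"
    by (simp add: exp_add[symmetric])
  have "sqrt 2 * sqrt (pi*2) = sqrt (2*(pi*2))" by (rule real_sqrt_mult[symmetric])
  hence s: "sqrt (pi * 4) = sqrt 2 * sqrt (pi*2)" by (simp add: mult_ac)
  show ?thesis unfolding normal_density_def using e by (simp add: s field_simps)
qed

lemma exp_quarter_times_gauss_density:
  "exp ((norm (x - c))\<^sup>2 / 4) * gauss_density c (x::real^'n)
     = (\<Prod>b\<in>Basis. sqrt 2 * normal_density (c \<bullet> b) (sqrt 2) (x \<bullet> b))"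
proof -
  have "exp ((norm (x - c))\<^sup>2 / 4) = (\<Prod>b\<in>(Basis::(real^'n) set). exp ((x \<bullet> b - c \<bullet> b)\<^sup>2 / 4))"
    by (simp add: norm_power2_eq_sum_Basis exp_sum[symmetric] sum_divide_distrib inner_diff_left)
  thus ?thesis
    by (simp add: gauss_density_eq_prod_normal_density prod.distrib[symmetric]
        exp_quarter_times_normal_density)
qed

lemma borel_measurable_gauss_density[measurable]: "gauss_density c \<in> borel_measurable borel"
  unfolding gauss_density_def by measurable

lemma gauss_density_nonneg: "0 \<le> gauss_density c x"
  by (simp add: gauss_density_def)

lemma has_bochner_integral_gauss_density:
  "has_bochner_integral lborel (gauss_density (c::real^'n)) 1"
proof (rule has_bochner_integral_nn_integral)
  have "(\<integral>\<^sup>+x. ennreal (gauss_density c x) \<partial>lborel)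
      = (\<integral>\<^sup>+x. (\<Prod>b\<in>Basis. ennreal (normal_density (c \<bullet> b) 1 (x \<bullet> b))) \<partial>lborel)"
    by (simp add: gauss_density_eq_prod_normal_density prod_ennreal)
  also have "\<dots> = (\<Prod>b\<in>(Basis::(real^'n) set). \<integral>\<^sup>+y. ennreal (normal_density (c \<bullet> b) 1 y) \<partial>lborel)"
    by (rule nn_integral_lborel_prod) auto
  also have "\<dots> = 1"
    by (simp add: nn_integral_eq_integral)
  finally show "(\<integral>\<^sup>+x. ennreal (gauss_density c x) \<partial>lborel) = ennreal 1" by simp
qed (auto simp: gauss_density_nonneg)

lemma integrable_gauss_density: "integrable lborel (gauss_density (c::real^'n))"
  using has_bochner_integral_gauss_density by (auto simp: has_bochner_integral_iff)

lemma has_bochner_integral_exp_moment_gauss_density: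
  "has_bochner_integral lborel (\<lambda>x. exp ((norm (x - c))\<^sup>2 / 4) * gauss_density (c::real^'n) x)
     (sqrt 2 ^ CARD('n))"
proof (rule has_bochner_integral_nn_integral)
  have "(\<integral>\<^sup>+x. ennreal (exp ((norm (x - c))\<^sup>2 / 4) * gauss_density c x) \<partial>lborel)
      = (\<integral>\<^sup>+x. (\<Prod>b\<in>Basis. ennreal (sqrt 2 * normal_density (c \<bullet> b) (sqrt 2) (x \<bullet> b))) \<partial>lborel)"
    by (simp only: exp_quarter_times_gauss_density prod_ennreal normal_density_nonneg
        real_sqrt_ge_zero mult_nonneg_nonneg)
  also have "\<dots> = (\<Prod>b\<in>(Basis::(real^'n) set).
                    \<integral>\<^sup>+y. ennreal (sqrt 2 * normal_density (c \<bullet> b) (sqrt 2) y) \<partial>lborel)"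
    by (rule nn_integral_lborel_prod) auto
  also have "\<dots> = (\<Prod>b\<in>(Basis::(real^'n) set). ennreal (sqrt 2))"
    by (intro prod.cong refl, subst nn_integral_eq_integral) auto
  also have "\<dots> = ennreal (sqrt 2 ^ CARD('n))"
    by (simp add: card_Basis_vec ennreal_power)
  finally show "(\<integral>\<^sup>+x. ennreal (exp ((norm (x - c))\<^sup>2 / 4) * gauss_density c x) \<partial>lborel)
      = ennreal (sqrt 2 ^ CARD('n))" .
qed (auto simp: gauss_density_nonneg)

lemma gauss_density_mass_disjoint_ball_le:
  fixes c :: "real^'n"
  assumes S: "S \<in> sets borel" and disj: "S \<inter> ball c R = {}" and "R \<ge> 0"
  shows "(\<integral>x. indicator S x * gauss_density c x \<partial>lborel) \<le> exp (- R\<^sup>2 / 4) * sqrt 2 ^ CARD('n)"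
proof -
  let ?moment = "\<lambda>x. exp (- R\<^sup>2 / 4) * (exp ((norm (x - c))\<^sup>2 / 4) * gauss_density c x)"
  have markov: "indicator S x * gauss_density c x \<le> ?moment x" for x
  proof (cases "x \<in> S")
    case True
    with disj have "R\<^sup>2 \<le> (norm (x - c))\<^sup>2"
      using \<open>R \<ge> 0\<close> by (intro power_mono) (auto simp: dist_norm norm_minus_commute)
    hence "1 \<le> exp (- R\<^sup>2 / 4) * exp ((norm (x - c))\<^sup>2 / 4)"
      by (simp add: exp_add[symmetric])
    hence "1 * gauss_density c x \<le> (exp (- R\<^sup>2 / 4) * exp ((norm (x - c))\<^sup>2 / 4)) * gauss_density c x"
      by (rule mult_right_mono) (rule gauss_density_nonneg)
    with True show ?thesis by (simp only: indicator_simps mult_1_left mult.assoc)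
  qed (simp add: gauss_density_nonneg)
  have "integrable lborel ?moment"
    using has_bochner_integral_exp_moment_gauss_density[of c]
    by (intro integrable_mult_right) (simp add: has_bochner_integral_iff)
  moreover have "integrable lborel (\<lambda>x. indicator S x * gauss_density c x)"
    using S integrable_gauss_density by (intro integrable_indicator_mult) auto
  ultimately have "(\<integral>x. indicator S x * gauss_density c x \<partial>lborel) \<le> (\<integral>x. ?moment x \<partial>lborel)"
    using markov by (intro integral_mono)
  also have "\<dots> = exp (- R\<^sup>2 / 4) * sqrt 2 ^ CARD('n)"
    using has_bochner_integral_exp_moment_gauss_density[of c]
    by (simp add: has_bochner_integral_integral_eq)
  finally show ?thesis .
qed

lemma gauss_density_mass_ball_ge:
  fixes c :: "real^'n"
  assumes "R \<ge> 0"
  shows "1 - exp (- R\<^sup>2 / 4) * sqrt 2 ^ CARD('n)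
           \<le> (\<integral>x. indicator (ball c R) x * gauss_density c x \<partial>lborel)"
proof -
  have "(\<integral>x. indicator (- ball c R) x * gauss_density c x \<partial>lborel)
        = (\<integral>x. gauss_density c x - indicator (ball c R) x * gauss_density c x \<partial>lborel)"
    by (simp add: indicator_compl algebra_simps)
  also have "\<dots> = 1 - (\<integral>x. indicator (ball c R) x * gauss_density c x \<partial>lborel)"
  proof (subst Bochner_Integration.integral_diff)
    show "integrable lborel (\<lambda>x. indicator (ball c R) x * gauss_density c x)"
      by (rule integrable_indicator_mult[OF _ integrable_gauss_density]) simp
  qed (simp_all add: integrable_gauss_density
         has_bochner_integral_integral_eq[OF has_bochner_integral_gauss_density])
  moreover have "- ball c R \<inter> ball c R = {}" by blast
  ultimately show ?thesis
    using gauss_density_mass_disjoint_ball_le[of "- ball c R" c R] assms by simp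
qed

lemma integrable_mixture_density: "integrable lborel (mixture_density K (v :: nat \<Rightarrow> real^'n))"
  unfolding mixture_density_def
  by (intro integrable_mult_right Bochner_Integration.integrable_sum) (rule integrable_gauss_density)

lemma integral_indicator_mixture_density:
  fixes v :: "nat \<Rightarrow> real^'n"
  assumes "S \<in> sets borel"
  shows "(\<integral>x. indicator S x * mixture_density K v x \<partial>lborel)
           = (\<Sum>j<K. \<integral>x. indicator S x * gauss_density (v j) x \<partial>lborel) / real K"
proof -
  have "(\<lambda>x. indicator S x * mixture_density K v x)
        = (\<lambda>x. (\<Sum>j<K. indicator S x * gauss_density (v j) x) / real K)"
    unfolding mixture_density_def sum_distrib_left[symmetric] by simp
  moreover have "integrable lborel (\<lambda>x. indicator S x * gauss_density c x)" for c :: "real^'n"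
    using assms integrable_gauss_density by (intro integrable_indicator_mult) auto
  ultimately show ?thesis
    by (simp only: integral_divide_zero Bochner_Integration.integral_sum)
qed

lemma integral_indicator_diff_le_tv_dist:
  fixes p q :: "'a::euclidean_space \<Rightarrow> real"
  assumes "S \<in> sets borel" and p: "integrable lborel p" and q: "integrable lborel q"
  shows "(\<integral>x. indicator S x * q x \<partial>lborel) - (\<integral>x. indicator S x * p x \<partial>lborel) \<le> 2 * tv_dist p q"
proof -
  have ind: "integrable lborel (\<lambda>x. indicator S x * f x)" if "integrable lborel f" for f :: "'a \<Rightarrow> real"
    using assms(1) that by (intro integrable_indicator_mult) auto
  have "(\<integral>x. indicator S x * q x \<partial>lborel) - (\<integral>x. indicator S x * p x \<partial>lborel)
        = (\<integral>x. indicator S x * (q x - p x) \<partial>lborel)"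
    using ind[OF p] ind[OF q] by (simp add: right_diff_distrib)
  also have "\<dots> \<le> (\<integral>x. \<bar>p x - q x\<bar> \<partial>lborel)"
    using ind[OF p] ind[OF q] p q
    by (intro integral_mono) (auto simp: right_diff_distrib indicator_def)
  finally show ?thesis by (simp add: tv_dist_def)
qed

lemma mixture_tv_small_imp_close_centre:
  fixes u v :: "nat \<Rightarrow> real^'n" and R :: real
  defines "\<tau> \<equiv> exp (- R\<^sup>2 / 4) * sqrt 2 ^ CARD('n)"
  assumes "i < K" and "R \<ge> 0"
    and tv: "2 * tv_dist (mixture_density K u) (mixture_density K v) < (1 - \<tau>) / real K - \<tau>"
  shows "\<exists>j<K. dist (v i) (u j) < 2 * R"
proof (rule ccontr)
  assume "\<not> ?thesis"
  hence far: "2 * R \<le> dist (v i) (u j)" if "j < K" for j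
    using that by (meson not_less)
  let ?B = "ball (v i) R"
  let ?mass = "\<lambda>c. \<integral>x. indicator ?B x * gauss_density c x \<partial>lborel"
  have K: "real K > 0" using \<open>i < K\<close> by simp
  have mass_nonneg: "0 \<le> ?mass c" for c
    by (intro integral_nonneg_AE AE_I2) (simp add: gauss_density_nonneg)
  have "1 - \<tau> \<le> ?mass (v i)"
    unfolding \<tau>_def using \<open>R \<ge> 0\<close> by (rule gauss_density_mass_ball_ge)
  also have "\<dots> \<le> (\<Sum>j<K. ?mass (v j))"
    by (rule member_le_sum) (use \<open>i < K\<close> mass_nonneg in auto)
  finally have "(1 - \<tau>) / real K \<le> (\<Sum>j<K. ?mass (v j)) / real K"
    using K by (rule divide_right_mono[OF _ less_imp_le])
  hence q_mass: "(1 - \<tau>) / real K \<le> (\<integral>x. indicator ?B x * mixture_density K v x \<partial>lborel)"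
    by (simp only: integral_indicator_mixture_density[OF borel_open[OF open_ball]])
  have "?mass (u j) \<le> \<tau>" if "j < K" for j
  proof -
    have "?B \<inter> ball (u j) R = {}"
      using far[OF that] by (intro disjoint_ballI) simp
    thus ?thesis
      unfolding \<tau>_def using \<open>R \<ge> 0\<close> by (intro gauss_density_mass_disjoint_ball_le) auto
  qed
  hence "(\<Sum>j<K. ?mass (u j)) \<le> real K * \<tau>"
    using sum_mono[of "{..<K}" "\<lambda>j. ?mass (u j)" "\<lambda>_. \<tau>"] by simp
  hence "(\<Sum>j<K. ?mass (u j)) / real K \<le> \<tau>"
    using K by (simp add: divide_le_eq mult.commute)
  hence p_mass: "(\<integral>x. indicator ?B x * mixture_density K u x \<partial>lborel) \<le> \<tau>"
    by (simp only: integral_indicator_mixture_density[OF borel_open[OF open_ball]])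
  have "(\<integral>x. indicator ?B x * mixture_density K v x \<partial>lborel)
        - (\<integral>x. indicator ?B x * mixture_density K u x \<partial>lborel)
        \<le> 2 * tv_dist (mixture_density K u) (mixture_density K v)"
    by (rule integral_indicator_diff_le_tv_dist) (simp_all add: integrable_mixture_density)
  with q_mass p_mass tv show False by linarith
qed

lemma gauss_tail_bound_times_Suc_lt_half:
  fixes n K :: nat
  assumes "n \<ge> 1" and "K \<ge> 2"
  shows "exp (- (16 * (real n * ln (real K)))) * sqrt 2 ^ n * (real K + 1) < 1 / 2"
proof -
  define L where "L = ln (real K)"
  have L: "ln 2 \<le> L" using assms(2) by (simp add: L_def)
  have "sqrt 2 ^ n = exp (ln 2 / 2) ^ n"
    by (simp add: ln_sqrt[symmetric])
  also have "\<dots> = exp (ln 2 * real n / 2)"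
    by (simp add: exp_of_nat_mult[symmetric] mult.commute)
  finally have sqrt2: "sqrt 2 ^ n = exp (ln 2 * real n / 2)" .
  have "real K + 1 \<le> exp (ln 2 + L)"
    using assms(2) by (simp add: L_def exp_add)
  hence "exp (- (16 * (real n * L))) * sqrt 2 ^ n * (real K + 1)
         \<le> exp (- (16 * (real n * L))) * exp (ln 2 * real n / 2) * exp (ln 2 + L)"
    by (simp add: sqrt2)
  also have "\<dots> = exp (ln 2 * real n / 2 + ln 2 + L * (1 - 16 * real n))"
    by (simp add: exp_add[symmetric] algebra_simps)
  also have "\<dots> < exp (- ln 2)"
  proof -
    have "L * (1 - 16 * real n) \<le> ln 2 * (1 - 16 * real n)"
      using L assms(1) by (intro mult_right_mono_neg) auto
    hence "L - 16 * (L * real n) \<le> ln 2 - 16 * (ln 2 * real n)"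
      by (simp add: algebra_simps)
    moreover have "ln 2 \<le> ln 2 * real n" using assms(1) by simp
    moreover have "0 < ln (2::real)" by simp
    moreover have "L * (1 - 16 * real n) = L - 16 * (L * real n)" by (simp add: algebra_simps)
    ultimately have "ln 2 * real n / 2 + ln 2 + L * (1 - 16 * real n) < - ln 2"
      by linarith
    thus ?thesis by simp
  qed
  also have "\<dots> = 1 / 2" by (simp add: exp_minus)
  finally show ?thesis by (simp add: L_def)
qed

lemma permutes_of_close_separated_centres:
  fixes a b :: "nat \<Rightarrow> 'a::metric_space"
  assumes close: "\<And>i. i < K \<Longrightarrow> \<exists>j<K. dist (a i) (b j) \<le> s"
    and sep: "\<And>i i'. i < K \<Longrightarrow> i' < K \<Longrightarrow> i \<noteq> i' \<Longrightarrow> 2 * s < dist (a i) (a i')"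
  shows "\<exists>\<pi>. \<pi> permutes {..<K} \<and> (\<forall>i<K. dist (a i) (b (\<pi> i)) \<le> s)"
proof -
  define \<pi> where "\<pi> i = (if i < K then SOME j. j < K \<and> dist (a i) (b j) \<le> s else i)" for i
  have \<pi>: "\<pi> i < K \<and> dist (a i) (b (\<pi> i)) \<le> s" if "i < K" for i
    using someI_ex[OF close[OF that]] that by (simp add: \<pi>_def)
  have "inj_on \<pi> {..<K}"
  proof (rule inj_onI, rule ccontr)
    fix i i' assume "i \<in> {..<K}" "i' \<in> {..<K}" and same: "\<pi> i = \<pi> i'" and "i \<noteq> i'"
    hence "i < K" "i' < K" by auto
    have "dist (a i) (a i') \<le> dist (a i) (b (\<pi> i)) + dist (a i') (b (\<pi> i))"
      by (rule dist_triangle2)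
    also have "\<dots> \<le> 2 * s"
      using \<pi>[OF \<open>i < K\<close>] \<pi>[OF \<open>i' < K\<close>] same by simp
    finally show False
      using sep[OF \<open>i < K\<close> \<open>i' < K\<close> \<open>i \<noteq> i'\<close>] by simp
  qed
  moreover have "\<pi> ` {..<K} = {..<K}"
    using \<open>inj_on \<pi> {..<K}\<close> \<pi> by (intro endo_inj_surj) auto
  ultimately have "\<pi> permutes {..<K}"
    by (intro bij_imp_permutes) (auto simp: bij_betw_def \<pi>_def)
  with \<pi> show ?thesis by blast
qed

theorem mainTheorem12:
  fixes K :: nat and ustar u :: "nat \<Rightarrow> real^'n"
  assumes "K \<ge> 2"
    and "\<And>i j. i < K \<Longrightarrow> j < K \<Longrightarrow> i \<noteq> j \<Longrightarrow>
           norm (ustar i - ustar j) \<ge> 100 * sqrt (real CARD('n) * ln (real K))"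
    and "tv_dist (mixture_density K u) (mixture_density K ustar) \<le> 1 / (4 * real K)"
  shows "\<exists>\<pi>. \<pi> permutes {..<K} \<and>
           (\<forall>i<K. norm (ustar i - u (\<pi> i)) \<le> 16 * sqrt (real CARD('n) * ln (real K)))"
proof -
  define r where "r = sqrt (real CARD('n) * ln (real K))"
  define \<tau> where "\<tau> = exp (- (8 * r)\<^sup>2 / 4) * sqrt 2 ^ CARD('n)"
  have K: "real K \<ge> 2" using assms(1) by simp
  have r: "r > 0" using K by (simp add: r_def)
  have "\<tau> * (real K + 1) < 1 / 2"
    using gauss_tail_bound_times_Suc_lt_half[of "CARD('n)" K] assms(1) r
    by (simp add: \<tau>_def power_mult_distrib r_def)
  hence "2 * tv_dist (mixture_density K u) (mixture_density K ustar) < (1 - \<tau>) / real K - \<tau>"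
    using assms(3) K by (simp add: field_simps)
  hence "\<exists>j<K. dist (ustar i) (u j) \<le> 16 * r" if "i < K" for i
    using mixture_tv_small_imp_close_centre[of i K "8 * r" u ustar] that r
    by (fastforce simp: \<tau>_def)
  moreover have "2 * (16 * r) < dist (ustar i) (ustar i')" if "i < K" "i' < K" "i \<noteq> i'" for i i'
  proof -
    have "100 * r \<le> dist (ustar i) (ustar i')"
      using assms(2)[OF that] by (simp add: dist_norm r_def)
    with r show ?thesis by linarith
  qed
  ultimately show ?thesis
    using permutes_of_close_separated_centres[of K ustar u "16 * r"]
    by (simp add: dist_norm r_def)
qed

end
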